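(* Let $f,g\colon (\mathbb C^n,0)\to \mathbb C$ be two germs of analytic functions. If $f$ and $g$ are bi-Lipschitz right-left equivalent, then ${\rm ord}_0(f)={\rm ord}_0(g)$.
   Context: $f$ and $g$ are bi-Lipschitz right-left equivalent if there are germs of bi-Lipschitz homeomorphisms $\varphi\colon(\mathbb C^n,0)\to(\mathbb C^n,0)$ and $\phi\colon(\mathbb C,0)\to(\mathbb C,0)$ with $f=\phi\circ g\circ\varphi$ near $0$. ${\rm ord}_0(f)$ is the smallest $k$ such that the homogeneous degree-$k$ part of the Taylor expansion of $f$ at $0$ is nonzero. *)

theory Defs
  imports "HOL-Analysis.Analysis" "HOL-Library.Extended_Nat"
begin

text \<open>Points of C^n are vectors of type complex^'n (the index type 'n is finite,
  so CARD('n) = n). Multi-indices are functions 'n => nat.\<close>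

definition monomial :: "complex ^ 'n \<Rightarrow> ('n \<Rightarrow> nat) \<Rightarrow> complex" where
  "monomial z \<alpha> = (\<Prod>i\<in>UNIV. (z $ i) ^ (\<alpha> i))"

definition mdeg :: "('n::finite \<Rightarrow> nat) \<Rightarrow> nat" where
  "mdeg \<alpha> = (\<Sum>i\<in>UNIV. \<alpha> i)"

definition power_series_at0 :: "(('n::finite \<Rightarrow> nat) \<Rightarrow> complex) \<Rightarrow> (complex ^ 'n \<Rightarrow> complex) \<Rightarrow> bool" where
  "power_series_at0 c f \<longleftrightarrow>
     (\<exists>r>0. \<forall>z. norm z < r \<longrightarrow> ((\<lambda>\<alpha>. c \<alpha> * monomial z \<alpha>) has_sum f z) UNIV)"

definition analytic_germ0 :: "(complex ^ 'n::finite \<Rightarrow> complex) \<Rightarrow> bool" where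
  "analytic_germ0 f \<longleftrightarrow> (\<exists>c. power_series_at0 c f)"

text \<open>Taylor coefficients of f at 0 (well defined by uniqueness of power series).\<close>
definition taylor_coeffs0 :: "(complex ^ 'n::finite \<Rightarrow> complex) \<Rightarrow> ('n \<Rightarrow> nat) \<Rightarrow> complex" where
  "taylor_coeffs0 f = (SOME c. power_series_at0 c f)"

definition ord0 :: "(complex ^ 'n::finite \<Rightarrow> complex) \<Rightarrow> enat" where
  "ord0 f = (let c = taylor_coeffs0 f in
     if \<exists>\<alpha>. c \<alpha> \<noteq> 0 then enat (LEAST k. \<exists>\<alpha>. mdeg \<alpha> = k \<and> c \<alpha> \<noteq> 0) else \<infinity>)"

definition bilip_homeo_germ0 :: "('a::real_normed_vector \<Rightarrow> 'a) \<Rightarrow> bool" where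
  "bilip_homeo_germ0 h \<longleftrightarrow> h 0 = 0 \<and>
     (\<exists>U K. open U \<and> 0 \<in> U \<and> inj_on h U \<and> open (h ` U) \<and> K > 0 \<and>
        (\<forall>x\<in>U. \<forall>y\<in>U. dist x y \<le> K * dist (h x) (h y) \<and> dist (h x) (h y) \<le> K * dist x y))"

text \<open>Bi-Lipschitz right-left equivalence of germs f, g : (C^n,0) -> (C,0):
  f = phi o g o varphi as germs at 0. The germs take the value 0 at 0, which is
  needed for the composition with a germ phi : (C,0) -> (C,0) to make sense.\<close>
definition bilip_RL_equiv :: "(complex ^ 'n::finite \<Rightarrow> complex) \<Rightarrow> (complex ^ 'n \<Rightarrow> complex) \<Rightarrow> bool" where
  "bilip_RL_equiv f g \<longleftrightarrow> f 0 = 0 \<and> g 0 = 0 \<and>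
     (\<exists>\<phi>\<^sub>1 \<phi>\<^sub>2. bilip_homeo_germ0 \<phi>\<^sub>1 \<and> bilip_homeo_germ0 (\<phi>\<^sub>2 :: complex \<Rightarrow> complex) \<and>
        (\<forall>\<^sub>F z in nhds 0. f z = \<phi>\<^sub>2 (g (\<phi>\<^sub>1 z))))"

end

(*
  For an analytic germ f, ord_0 f >= k holds exactly when |f z| = O(|z|^k) as z -> 0.
  One direction bounds the tail of the Taylor series. For the other, let m = |alpha| < k and
  average f(z) z^(-alpha) over the points of the torus |z_i| = rho whose coordinates are rho times
  (m+1)-st roots of unity: by the Taylor expansion the average is c_alpha + O(rho^(m+1)), by the
  growth bound it is O(rho^(k-m)), so c_alpha = 0.
  The condition |f z| = O(|z|^k) is preserved by composing with maps that are Lipschitz at 0 on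
  either side, and the relation f = phi2 o g o phi1 can be inverted to g = psi2 o f o psi1 with
  bi-Lipschitz psi1, psi2. Hence f and g satisfy the same growth conditions and have the same order.
*)
theory Submission
  imports Defs "HOL-Library.Landau_Symbols" "HOL-Library.Real_Mod"
begin

lemma has_sum_sum:
  fixes f :: "'i \<Rightarrow> 'a \<Rightarrow> 'b::topological_comm_monoid_add"
  assumes "finite I" "\<And>i. i \<in> I \<Longrightarrow> (f i has_sum s i) A"
  shows "((\<lambda>x. \<Sum>i\<in>I. f i x) has_sum (\<Sum>i\<in>I. s i)) A"
  using assms by (induction I rule: finite_induct) (simp_all add: has_sum_add)

lemma norm_has_sum_le:
  fixes f :: "'a \<Rightarrow> 'b::banach"
  assumes f: "(f has_sum a) A" and g: "(g has_sum b) A"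
    and le: "\<And>x. x \<in> A \<Longrightarrow> norm (f x) \<le> g x"
  shows "norm a \<le> b"
proof -
  have summable: "(\<lambda>x. norm (f x)) summable_on A"
    by (rule summable_on_comparison_test[OF has_sum_imp_summable[OF g]]) (auto intro: le)
  have "norm a = norm (infsum f A)"
    using f by (simp add: infsumI)
  also have "\<dots> \<le> infsum (\<lambda>x. norm (f x)) A"
    by (rule norm_infsum_bound[OF summable])
  also have "\<dots> \<le> infsum g A"
    by (rule infsum_mono[OF summable has_sum_imp_summable[OF g]]) (auto intro: le)
  also have "\<dots> = b"
    using g by (simp add: infsumI)
  finally show ?thesis .
qed

lemma enat_eqI_enat_le:
  fixes a b :: enat
  assumes "\<And>k. enat k \<le> a \<longleftrightarrow> enat k \<le> b"
  shows "a = b"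
proof (cases a)
  case (enat x)
  then have "enat x \<le> b" "\<not> enat (Suc x) \<le> b"
    using assms[of x] assms[of "Suc x"] by auto
  then show ?thesis using enat by (cases b) auto
next
  case infinity
  then have "enat k \<le> b" for k using assms by simp
  then show ?thesis using infinity by (cases b) (auto, metis Suc_n_not_le_n)
qed

lemma norm_vec_le_card_mult:
  fixes x :: "'a::real_normed_vector ^ 'n"
  assumes "\<And>i. norm (x $ i) \<le> b"
  shows "norm x \<le> real CARD('n) * b"
proof -
  have "norm x \<le> (\<Sum>i\<in>UNIV. norm (x $ i))"
    by (simp add: norm_vec_def L2_set_le_sum)
  also have "\<dots> \<le> real CARD('n) * b"
    using sum_mono[of UNIV "\<lambda>i. norm (x $ i)" "\<lambda>_. b"] assms by simp
  finally show ?thesis .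
qed

lemma tendsto_0_if_norm_bigo:
  fixes g :: "'a \<Rightarrow> real"
  assumes "(\<lambda>x. norm (f x)) \<in> O[F](g)" and "(g \<longlongrightarrow> 0) F"
  shows "(f \<longlongrightarrow> 0) F"
proof -
  obtain c where c: "\<forall>\<^sub>F x in F. norm (norm (f x)) \<le> c * norm (g x)"
    using assms(1) by (elim landau_o.bigE)
  have "\<forall>\<^sub>F x in F. norm (f x) \<le> c * \<bar>g x\<bar>"
    using c by (rule eventually_mono) simp
  moreover have "((\<lambda>x. c * \<bar>g x\<bar>) \<longlongrightarrow> 0) F"
    by (intro tendsto_mult_right_zero tendsto_rabs_zero assms(2))
  ultimately show ?thesis
    by (rule Lim_null_comparison)
qed

lemma norm_monomial_le: "norm (monomial z \<alpha>) \<le> norm z ^ mdeg \<alpha>"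
proof -
  have "norm (monomial z \<alpha>) = (\<Prod>i\<in>UNIV. norm (z $ i) ^ \<alpha> i)"
    by (simp add: monomial_def prod_norm[symmetric] norm_power)
  also have "\<dots> \<le> (\<Prod>i\<in>UNIV. norm z ^ \<alpha> i)"
    by (intro prod_mono conjI power_mono) (auto simp: Finite_Cartesian_Product.norm_nth_le)
  also have "\<dots> = norm z ^ mdeg \<alpha>"
    by (simp add: mdeg_def power_sum)
  finally show ?thesis .
qed

lemma monomial_const_vec: "monomial (\<chi> i. c) \<alpha> = c ^ mdeg \<alpha>"
  by (simp add: monomial_def mdeg_def power_sum)

lemma monomial_0: "monomial 0 \<alpha> = (if \<alpha> = (\<lambda>_. 0) then 1 else 0)"
  by (auto simp: monomial_def prod_zero_iff)

lemma mdeg_eq_0_iff: "mdeg \<alpha> = 0 \<longleftrightarrow> \<alpha> = (\<lambda>_. 0)"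
  by (auto simp: mdeg_def)

lemma le_mdeg: "\<alpha> i \<le> mdeg \<alpha>"
  unfolding mdeg_def by (rule member_le_sum) auto

lemma power_series_abs_summable:
  fixes c :: "('n::finite \<Rightarrow> nat) \<Rightarrow> complex"
  assumes series: "\<forall>z. norm z < r \<longrightarrow> ((\<lambda>\<alpha>. c \<alpha> * monomial z \<alpha>) has_sum f z) UNIV"
    and "r > 0"
  obtains \<rho> M where "0 < \<rho>" "\<rho> < r" "real CARD('n) * \<rho> < r" "0 \<le> M"
    and "((\<lambda>\<alpha>. norm (c \<alpha>) * \<rho> ^ mdeg \<alpha>) has_sum M) UNIV"
proof -
  define \<rho> where "\<rho> = r / (real CARD('n) + 1)"
  have \<rho>: "0 < \<rho>" "\<rho> < r" "real CARD('n) * \<rho> < r"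
    using \<open>r > 0\<close> by (auto simp: \<rho>_def field_simps)
  define p :: "complex ^ 'n" where "p = (\<chi> i. complex_of_real \<rho>)"
  have "norm p < r"
    using \<rho> norm_vec_le_card_mult[of p \<rho>] by (simp add: p_def)
  then have "(\<lambda>\<alpha>. c \<alpha> * monomial p \<alpha>) summable_on UNIV"
    using series has_sum_imp_summable by blast
  then have "(\<lambda>\<alpha>. norm (c \<alpha> * monomial p \<alpha>)) summable_on UNIV"
    by (metis summable_on_iff_abs_summable_on_complex)
  then have "(\<lambda>\<alpha>. norm (c \<alpha>) * \<rho> ^ mdeg \<alpha>) summable_on UNIV"
    using \<rho> by (simp add: p_def monomial_const_vec norm_mult norm_power)
  moreover have "0 \<le> infsum (\<lambda>\<alpha>. norm (c \<alpha>) * \<rho> ^ mdeg \<alpha>) UNIV"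
    using \<rho> by (intro infsum_nonneg) simp
  ultimately show ?thesis
    using that \<rho> has_sum_infsum by blast
qed

lemma power_series_bigo_if_low_coeffs_vanish:
  fixes c :: "('n::finite \<Rightarrow> nat) \<Rightarrow> complex"
  assumes series: "\<forall>z. norm z < r \<longrightarrow> ((\<lambda>\<alpha>. c \<alpha> * monomial z \<alpha>) has_sum f z) UNIV"
    and "r > 0" and vanish: "\<forall>\<alpha>. mdeg \<alpha> < k \<longrightarrow> c \<alpha> = 0"
  shows "(\<lambda>z. norm (f z)) \<in> O[nhds 0](\<lambda>z. norm z ^ k)"
proof -
  obtain \<rho> M where \<rho>: "0 < \<rho>" "\<rho> < r"
    and M: "((\<lambda>\<alpha>. norm (c \<alpha>) * \<rho> ^ mdeg \<alpha>) has_sum M) UNIV"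
    using power_series_abs_summable[OF series \<open>r > 0\<close>] by blast
  have bound: "norm (f z) \<le> M / \<rho> ^ k * norm z ^ k" if z: "z \<in> ball 0 \<rho>" for z
  proof -
    define t where "t = norm z / \<rho>"
    have t: "0 \<le> t" "t \<le> 1"
      using z \<rho> by (auto simp: t_def)
    have "norm (c \<alpha> * monomial z \<alpha>) \<le> norm (c \<alpha>) * \<rho> ^ mdeg \<alpha> * t ^ k" for \<alpha>
    proof (cases "mdeg \<alpha> < k")
      case False
      have "norm (c \<alpha> * monomial z \<alpha>) \<le> norm (c \<alpha>) * (\<rho> ^ mdeg \<alpha> * t ^ mdeg \<alpha>)"
        using \<rho> by (simp add: norm_mult mult_left_mono norm_monomial_le t_def power_divide)
      also have "\<dots> \<le> norm (c \<alpha>) * (\<rho> ^ mdeg \<alpha> * t ^ k)"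
        using False t \<rho> by (intro mult_left_mono power_decreasing) auto
      finally show ?thesis by (simp add: mult.assoc)
    qed (use vanish in simp)
    moreover have "((\<lambda>\<alpha>. c \<alpha> * monomial z \<alpha>) has_sum f z) UNIV"
      using series z \<rho> by simp
    ultimately have "norm (f z) \<le> M * t ^ k"
      by (intro norm_has_sum_le[OF _ has_sum_cmult_left[OF M]])
    then show ?thesis by (simp add: t_def power_divide)
  qed
  have "\<forall>\<^sub>F z in nhds 0. norm (norm (f z)) \<le> M / \<rho> ^ k * norm (norm z ^ k)"
    using eventually_nhds_ball[OF \<rho>(1)] by (rule eventually_mono) (use bound in auto)
  then show ?thesis
    by (rule bigoI)
qed

lemma sum_roots_of_unity_power:
  assumes "N > 0"
  shows "(\<Sum>j<N. cis (2 * pi * real j * of_int d / real N)) = (if int N dvd d then of_nat N else 0)"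
proof -
  define x where "x = cis (2 * pi * of_int d / real N)"
  have power: "cis (2 * pi * real j * of_int d / real N) = x ^ j" for j
    unfolding x_def Complex.DeMoivre by (simp add: field_simps)
  show ?thesis
  proof (cases "int N dvd d")
    case True
    then obtain q where "d = int N * q" by blast
    then have "2 * pi * of_int d / real N = 2 * pi * of_int q"
      using assms by simp
    then have "x = 1"
      unfolding x_def by (simp only:) (rule cis_multiple_2pi, simp)
    then show ?thesis using True by (simp add: power)
  next
    case False
    have "x \<noteq> 1"
    proof
      assume "x = 1"
      then obtain q where "2 * pi * of_int d / real N = of_int q * (2 * pi)"
        unfolding x_def cis_eq_1_iff by blast
      then have "of_int d = (of_int (int N * q) :: real)"
        using assms by (simp add: field_simps)
      then show False using False by (metis dvd_triv_left of_int_eq_iff)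
    qed
    moreover have "x ^ N = 1"
      using assms by (simp add: x_def Complex.DeMoivre)
    ultimately show ?thesis
      using False by (simp add: power geometric_sum)
  qed
qed

lemma mdeg_ge_if_congruent:
  assumes "\<forall>i. \<alpha> i < N" and "\<forall>i. \<beta> i mod N = \<alpha> i mod N" and "\<beta> \<noteq> \<alpha>"
  shows "mdeg \<alpha> + N \<le> mdeg \<beta>"
proof -
  have \<beta>_eq: "\<beta> i = N * (\<beta> i div N) + \<alpha> i" for i
    using assms(1,2) by (metis div_mult_mod_eq mod_less mult.commute)
  then have le: "\<alpha> i \<le> \<beta> i" for i
    by (metis le_add2)
  obtain i0 where "\<beta> i0 \<noteq> \<alpha> i0"
    using assms(3) by blast
  then have "\<alpha> i0 + N \<le> \<beta> i0"
    using \<beta>_eq[of i0] by (cases "\<beta> i0 div N") auto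
  moreover have "(\<Sum>i\<in>UNIV - {i0}. \<alpha> i) \<le> (\<Sum>i\<in>UNIV - {i0}. \<beta> i)"
    by (intro sum_mono le)
  ultimately show ?thesis
    unfolding mdeg_def by (simp add: sum.remove[of UNIV i0])
qed

definition root_torus :: "nat \<Rightarrow> real \<Rightarrow> ('n::finite \<Rightarrow> nat) \<Rightarrow> complex ^ 'n" where
  "root_torus N \<rho> J = (\<chi> i. complex_of_real \<rho> * cis (2 * pi * real (J i) / real N))"

text \<open>\<open>N\<^sup>n \<rho>\<^bsup>|\<alpha>|\<^esup>\<close> times the Riemann sum, over the grid of \<open>N\<close>-th roots of unity, of the
  Cauchy integral over the torus \<open>|z\<^sub>i| = \<rho>\<close> that gives the coefficient of \<open>z\<^sup>\<alpha>\<close>.\<close>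
definition torus_average ::
    "nat \<Rightarrow> real \<Rightarrow> ('n::finite \<Rightarrow> nat) \<Rightarrow> (complex ^ 'n \<Rightarrow> complex) \<Rightarrow> complex" where
  "torus_average N \<rho> \<alpha> f =
     (\<Sum>J\<in>PiE UNIV (\<lambda>_. {..<N}).
        (\<Prod>i\<in>UNIV. cis (- 2 * pi * real (J i * \<alpha> i) / real N)) * f (root_torus N \<rho> J))"

lemma norm_root_torus_le:
  assumes "0 \<le> \<rho>"
  shows "norm (root_torus N \<rho> J :: complex ^ 'n::finite) \<le> real CARD('n) * \<rho>"
  using assms by (intro norm_vec_le_card_mult) (simp add: root_torus_def norm_mult)

lemma torus_average_monomial:
  fixes \<alpha> \<beta> :: "'n::finite \<Rightarrow> nat"
  assumes "N > 0"
  shows "torus_average N \<rho> \<alpha> (\<lambda>z. monomial z \<beta>) =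
    (if \<forall>i. \<beta> i mod N = \<alpha> i mod N then of_nat N ^ CARD('n) * complex_of_real \<rho> ^ mdeg \<beta> else 0)"
proof -
  define e where "e i j = cis (2 * pi * real j * of_int (int (\<beta> i) - int (\<alpha> i)) / real N)" for i j
  have summand: "(\<Prod>i\<in>UNIV. cis (- 2 * pi * real (J i * \<alpha> i) / real N)) * monomial (root_torus N \<rho> J) \<beta>
      = complex_of_real \<rho> ^ mdeg \<beta> * (\<Prod>i\<in>UNIV. e i (J i))" for J
  proof -
    have "monomial (root_torus N \<rho> J) \<beta>
        = (\<Prod>i\<in>UNIV. complex_of_real \<rho> ^ \<beta> i) * (\<Prod>i\<in>UNIV. cis (2 * pi * real (J i * \<beta> i) / real N))"
      by (simp add: monomial_def root_torus_def power_mult_distrib prod.distrib Complex.DeMoivre mult_ac)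
    moreover have "cis (- 2 * pi * real (J i * \<alpha> i) / real N) * cis (2 * pi * real (J i * \<beta> i) / real N)
        = e i (J i)" for i
      unfolding e_def cis_mult using assms by (intro arg_cong[where f = cis]) (simp add: field_simps)
    ultimately show ?thesis
      by (simp add: mdeg_def power_sum prod.distrib[symmetric] mult_ac)
  qed
  have congruent: "int N dvd int (\<beta> i) - int (\<alpha> i) \<longleftrightarrow> \<beta> i mod N = \<alpha> i mod N" for i
    by (metis mod_eq_dvd_iff of_nat_eq_iff zmod_int)
  have "torus_average N \<rho> \<alpha> (\<lambda>z. monomial z \<beta>)
      = (\<Sum>J\<in>PiE UNIV (\<lambda>_. {..<N}). complex_of_real \<rho> ^ mdeg \<beta> * (\<Prod>i\<in>UNIV. e i (J i)))"
    unfolding torus_average_def summand ..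
  also have "\<dots> = complex_of_real \<rho> ^ mdeg \<beta> * (\<Prod>i\<in>UNIV. \<Sum>j<N. e i j)"
    by (subst prod_sum_PiE) (auto simp: sum_distrib_left)
  also have "(\<Prod>i\<in>UNIV. \<Sum>j<N. e i j) = (\<Prod>i\<in>UNIV. if \<beta> i mod N = \<alpha> i mod N then of_nat N else 0)"
    unfolding e_def sum_roots_of_unity_power[OF assms] congruent ..
  also have "\<dots> = (if \<forall>i. \<beta> i mod N = \<alpha> i mod N then of_nat N ^ CARD('n) else 0)"
    by (auto simp: prod_zero_iff)
  finally show ?thesis by simp
qed

lemma norm_torus_average_le:
  fixes f :: "complex ^ 'n::finite \<Rightarrow> complex"
  assumes "\<And>J. norm (f (root_torus N \<rho> J)) \<le> B"
  shows "norm (torus_average N \<rho> \<alpha> f) \<le> real N ^ CARD('n) * B"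
proof -
  have "norm (torus_average N \<rho> \<alpha> f)
      \<le> (\<Sum>J\<in>PiE (UNIV::'n set) (\<lambda>_. {..<N}). norm (f (root_torus N \<rho> J)))"
    unfolding torus_average_def
    by (rule norm_sum[THEN order_trans]) (simp add: norm_mult prod_norm[symmetric])
  also have "\<dots> \<le> real (card (PiE (UNIV::'n set) (\<lambda>_. {..<N}))) * B"
    using assms by (intro sum_bounded_above) auto
  finally show ?thesis
    by (simp add: card_PiE)
qed

lemma torus_average_power_series:
  fixes c :: "('n::finite \<Rightarrow> nat) \<Rightarrow> complex"
  assumes series: "\<forall>z. norm z < r \<longrightarrow> ((\<lambda>\<alpha>. c \<alpha> * monomial z \<alpha>) has_sum f z) UNIV"
    and "0 \<le> \<rho>" and "real CARD('n) * \<rho> < r"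
  shows "((\<lambda>\<beta>. c \<beta> * torus_average N \<rho> \<alpha> (\<lambda>z. monomial z \<beta>)) has_sum torus_average N \<rho> \<alpha> f) UNIV"
proof -
  define w where "w J = (\<Prod>i\<in>UNIV. cis (- 2 * pi * real (J i * \<alpha> i) / real N))" for J
  have "((\<lambda>\<beta>. w J * (c \<beta> * monomial (root_torus N \<rho> J) \<beta>)) has_sum w J * f (root_torus N \<rho> J)) UNIV"
    for J
    using series assms(2,3) norm_root_torus_le[of \<rho> N J]
    by (intro has_sum_cmult_right) simp
  then have "((\<lambda>\<beta>. \<Sum>J\<in>PiE UNIV (\<lambda>_. {..<N}). w J * (c \<beta> * monomial (root_torus N \<rho> J) \<beta>))
      has_sum torus_average N \<rho> \<alpha> f) UNIV"
    unfolding torus_average_def w_def[symmetric] by (intro has_sum_sum) (auto intro: finite_PiE)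
  then show ?thesis
    unfolding torus_average_def w_def[symmetric] by (simp add: sum_distrib_left mult_ac)
qed

lemma torus_average_power_series_remainder:
  fixes c :: "('n::finite \<Rightarrow> nat) \<Rightarrow> complex"
  assumes series: "\<forall>z. norm z < r \<longrightarrow> ((\<lambda>\<alpha>. c \<alpha> * monomial z \<alpha>) has_sum f z) UNIV"
    and \<alpha>_less: "\<forall>i. \<alpha> i < N"
    and M: "((\<lambda>\<beta>. norm (c \<beta>) * \<rho>\<^sub>0 ^ mdeg \<beta>) has_sum M) UNIV"
    and \<rho>: "0 \<le> \<rho>" "\<rho> \<le> \<rho>\<^sub>0" "0 < \<rho>\<^sub>0" "real CARD('n) * \<rho> < r"
  shows "norm (torus_average N \<rho> \<alpha> f - of_nat N ^ CARD('n) * c \<alpha> * complex_of_real \<rho> ^ mdeg \<alpha>)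
    \<le> real N ^ CARD('n) * M * (\<rho> / \<rho>\<^sub>0) ^ (mdeg \<alpha> + N)"
proof -
  have "N > 0"
    using \<alpha>_less by (metis gr_zeroI not_less0)
  define T where "T \<beta> = c \<beta> * torus_average N \<rho> \<alpha> (\<lambda>z. monomial z \<beta>)" for \<beta>
  define t where "t = \<rho> / \<rho>\<^sub>0"
  have t: "0 \<le> t" "t \<le> 1"
    using \<rho> by (auto simp: t_def)
  have T_\<alpha>: "T \<alpha> = of_nat N ^ CARD('n) * c \<alpha> * complex_of_real \<rho> ^ mdeg \<alpha>"
    by (simp add: T_def torus_average_monomial[OF \<open>N > 0\<close>])
  have "(T has_sum torus_average N \<rho> \<alpha> f) UNIV"
    unfolding T_def by (rule torus_average_power_series[OF series \<rho>(1,4)])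
  moreover have "((\<lambda>\<beta>. if \<beta> = \<alpha> then T \<alpha> else 0) has_sum T \<alpha>) UNIV"
    by (rule has_sum_finite_neutralI[of "{\<alpha>}"]) auto
  ultimately have remainder_sum: "((\<lambda>\<beta>. T \<beta> + - (if \<beta> = \<alpha> then T \<alpha> else 0)) has_sum
      torus_average N \<rho> \<alpha> f + - T \<alpha>) UNIV"
    by (intro has_sum_add has_sum_uminusI)
  \<comment> \<open>Averaging kills every monomial not congruent to \<open>z\<^sup>\<alpha>\<close> modulo \<open>N\<close>, and the surviving
    ones other than \<open>z\<^sup>\<alpha>\<close> have degree at least \<open>|\<alpha>| + N\<close>.\<close>
  have remainder_le: "norm (T \<beta> + - (if \<beta> = \<alpha> then T \<alpha> else 0))
      \<le> real N ^ CARD('n) * (norm (c \<beta>) * \<rho>\<^sub>0 ^ mdeg \<beta> * t ^ (mdeg \<alpha> + N))" for \<beta>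
  proof (cases "\<beta> \<noteq> \<alpha> \<and> (\<forall>i. \<beta> i mod N = \<alpha> i mod N)")
    case True
    then have deg: "mdeg \<alpha> + N \<le> mdeg \<beta>"
      using mdeg_ge_if_congruent[OF \<alpha>_less] by blast
    have "norm (T \<beta> + - (if \<beta> = \<alpha> then T \<alpha> else 0))
        = real N ^ CARD('n) * (norm (c \<beta>) * (\<rho>\<^sub>0 ^ mdeg \<beta> * t ^ mdeg \<beta>))"
      using True \<rho> by (simp add: T_def torus_average_monomial[OF \<open>N > 0\<close>] norm_mult norm_power
          t_def power_divide)
    also have "\<dots> \<le> real N ^ CARD('n) * (norm (c \<beta>) * (\<rho>\<^sub>0 ^ mdeg \<beta> * t ^ (mdeg \<alpha> + N)))"
      using deg t \<rho> by (intro mult_left_mono power_decreasing) auto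
    finally show ?thesis by (simp add: mult.assoc)
  qed (use t \<rho> in \<open>auto simp: T_def torus_average_monomial[OF \<open>N > 0\<close>]\<close>)
  have "((\<lambda>\<beta>. real N ^ CARD('n) * (norm (c \<beta>) * \<rho>\<^sub>0 ^ mdeg \<beta> * t ^ (mdeg \<alpha> + N)))
      has_sum real N ^ CARD('n) * (M * t ^ (mdeg \<alpha> + N))) UNIV"
    by (intro has_sum_cmult_right has_sum_cmult_left M)
  then have "norm (torus_average N \<rho> \<alpha> f + - T \<alpha>) \<le> real N ^ CARD('n) * (M * t ^ (mdeg \<alpha> + N))"
    by (rule norm_has_sum_le[OF remainder_sum]) (rule remainder_le)
  then show ?thesis
    by (simp add: T_\<alpha> t_def mult.assoc)
qed

lemma power_series_coeff_estimate:
  fixes c :: "('n::finite \<Rightarrow> nat) \<Rightarrow> complex"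
  assumes series: "\<forall>z. norm z < r \<longrightarrow> ((\<lambda>\<alpha>. c \<alpha> * monomial z \<alpha>) has_sum f z) UNIV"
    and \<alpha>_less: "\<forall>i. \<alpha> i < N"
    and M: "((\<lambda>\<beta>. norm (c \<beta>) * \<rho>\<^sub>0 ^ mdeg \<beta>) has_sum M) UNIV"
    and f_le: "\<And>z. norm z < \<delta> \<Longrightarrow> norm (f z) \<le> C * norm z ^ k" and "C \<ge> 0"
    and \<rho>: "0 < \<rho>" "\<rho> \<le> \<rho>\<^sub>0" "real CARD('n) * \<rho> < r" "real CARD('n) * \<rho> < \<delta>"
  shows "norm (c \<alpha>) * \<rho> ^ mdeg \<alpha> \<le> C * (real CARD('n) * \<rho>) ^ k + M * (\<rho> / \<rho>\<^sub>0) ^ (mdeg \<alpha> + N)"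
proof -
  define A where "A = torus_average N \<rho> \<alpha> f"
  define X where "X = of_nat N ^ CARD('n) * c \<alpha> * complex_of_real \<rho> ^ mdeg \<alpha>"
  define E where "E = C * (real CARD('n) * \<rho>) ^ k"
  have "N > 0"
    using \<alpha>_less by (metis gr_zeroI not_less0)
  have "real N ^ CARD('n) * (norm (c \<alpha>) * \<rho> ^ mdeg \<alpha>) = norm X"
    using \<rho> by (simp add: X_def norm_mult norm_power)
  also have "\<dots> \<le> norm A + norm (A - X)"
    using norm_triangle_sub[of X A] by (simp add: norm_minus_commute)
  also have "\<dots> \<le> real N ^ CARD('n) * E + real N ^ CARD('n) * M * (\<rho> / \<rho>\<^sub>0) ^ (mdeg \<alpha> + N)"
  proof (rule add_mono)
    show "norm A \<le> real N ^ CARD('n) * E"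
      unfolding A_def
    proof (rule norm_torus_average_le)
      fix J :: "'n \<Rightarrow> nat"
      have "norm (root_torus N \<rho> J) \<le> real CARD('n) * \<rho>"
        using \<rho> by (intro norm_root_torus_le) simp
      then have "norm (f (root_torus N \<rho> J)) \<le> C * norm (root_torus N \<rho> J) ^ k"
        using \<rho>(4) by (intro f_le) linarith
      also have "\<dots> \<le> E"
        unfolding E_def using \<open>norm (root_torus N \<rho> J) \<le> _\<close> \<open>C \<ge> 0\<close>
        by (intro mult_left_mono power_mono) auto
      finally show "norm (f (root_torus N \<rho> J)) \<le> E" .
    qed
    show "norm (A - X) \<le> real N ^ CARD('n) * M * (\<rho> / \<rho>\<^sub>0) ^ (mdeg \<alpha> + N)"
      unfolding A_def X_def using \<rho>
      by (intro torus_average_power_series_remainder[OF series \<alpha>_less M]) auto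
  qed
  finally have "real N ^ CARD('n) * (norm (c \<alpha>) * \<rho> ^ mdeg \<alpha>)
      \<le> real N ^ CARD('n) * (E + M * (\<rho> / \<rho>\<^sub>0) ^ (mdeg \<alpha> + N))"
    by (simp add: distrib_left mult.assoc)
  then show ?thesis
    using \<open>N > 0\<close> by (simp add: mult_le_cancel_left_pos E_def)
qed

lemma power_series_coeff_bigo_at_right_0:
  fixes c :: "('n::finite \<Rightarrow> nat) \<Rightarrow> complex"
  assumes series: "\<forall>z. norm z < r \<longrightarrow> ((\<lambda>\<alpha>. c \<alpha> * monomial z \<alpha>) has_sum f z) UNIV"
    and "r > 0" and bigo: "(\<lambda>z. norm (f z)) \<in> O[nhds 0](\<lambda>z. norm z ^ k)"
    and "mdeg \<alpha> < k"
  shows "(\<lambda>_::real. norm (c \<alpha>)) \<in> O[at_right 0](\<lambda>\<rho>. \<rho>)"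
proof -
  define n where "n = real CARD('n)"
  define m where "m = mdeg \<alpha>"
  define N where "N = m + 1"
  \<comment> \<open>As \<open>N > \<alpha> i\<close> for all \<open>i\<close>, the only multi-index of degree below \<open>m + N\<close> that is
    congruent to \<open>\<alpha>\<close> modulo \<open>N\<close> is \<open>\<alpha>\<close> itself; this is what isolates \<open>c \<alpha>\<close>.\<close>
  have n: "n \<ge> 1"
    by (simp add: n_def Suc_le_eq)
  have \<alpha>_less: "\<forall>i. \<alpha> i < N"
    by (simp add: N_def m_def less_Suc_eq_le le_mdeg)
  obtain \<rho>\<^sub>0 M where \<rho>\<^sub>0: "0 < \<rho>\<^sub>0" "n * \<rho>\<^sub>0 < r" and "M \<ge> 0"
    and M: "((\<lambda>\<beta>. norm (c \<beta>) * \<rho>\<^sub>0 ^ mdeg \<beta>) has_sum M) UNIV"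
    using power_series_abs_summable[OF series \<open>r > 0\<close>] unfolding n_def by blast
  obtain C where "C > 0" and "\<forall>\<^sub>F z in nhds 0. norm (norm (f z)) \<le> C * norm (norm z ^ k)"
    using bigo by (elim landau_o.bigE)
  then obtain \<delta> where "\<delta> > 0" and f_le: "\<And>z. norm z < \<delta> \<Longrightarrow> norm (f z) \<le> C * norm z ^ k"
    unfolding eventually_nhds_metric by (auto simp: dist_norm)
  define B where "B = C * n ^ k + M / \<rho>\<^sub>0 ^ (m + N)"
  have "norm (c \<alpha>) \<le> B * \<rho>" if "\<rho> \<in> {0 <..< min (min \<rho>\<^sub>0 1) (\<delta> / n)}" for \<rho>
  proof -
    have \<rho>: "0 < \<rho>" "\<rho> \<le> \<rho>\<^sub>0" "\<rho> \<le> 1" "n * \<rho> < \<delta>"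
      using that n by (auto simp: field_simps)
    then have "n * \<rho> < r"
      using mult_left_mono[of \<rho> \<rho>\<^sub>0 n] n \<rho>\<^sub>0 by linarith
    have "norm (c \<alpha>) * \<rho> ^ m \<le> C * (n * \<rho>) ^ k + M * (\<rho> / \<rho>\<^sub>0) ^ (m + N)"
      unfolding m_def n_def using \<rho> \<open>n * \<rho> < r\<close> \<open>C > 0\<close>
      by (intro power_series_coeff_estimate[OF series \<alpha>_less M f_le]) (auto simp: n_def)
    also have "\<dots> = C * n ^ k * \<rho> ^ k + M / \<rho>\<^sub>0 ^ (m + N) * \<rho> ^ (m + N)"
      by (simp add: power_mult_distrib power_divide)
    also have "\<dots> \<le> C * n ^ k * \<rho> ^ (m + 1) + M / \<rho>\<^sub>0 ^ (m + N) * \<rho> ^ (m + 1)"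
      using \<rho> \<rho>\<^sub>0 n \<open>C > 0\<close> \<open>M \<ge> 0\<close> \<open>mdeg \<alpha> < k\<close>
      by (intro add_mono mult_left_mono power_decreasing) (auto simp: m_def N_def)
    also have "\<dots> = (B * \<rho>) * \<rho> ^ m"
      by (simp add: B_def algebra_simps)
    finally show ?thesis
      using \<rho> by simp
  qed
  then have "\<forall>\<^sub>F \<rho> in at_right 0. norm (norm (c \<alpha>)) \<le> B * norm (\<rho> :: real)"
    using \<rho>\<^sub>0 \<open>\<delta> > 0\<close> n
    by (intro eventually_at_rightI[where b = "min (min \<rho>\<^sub>0 1) (\<delta> / n)"]) auto
  then show ?thesis
    by (rule bigoI)
qed

lemma eq_0_if_const_bigo_at_right_0:
  fixes x :: real
  assumes "(\<lambda>_::real. x) \<in> O[at_right 0](\<lambda>\<rho>. \<rho>)"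
  shows "x = 0"
proof -
  obtain B where "\<forall>\<^sub>F \<rho> in at_right 0. norm x \<le> B * norm (\<rho> :: real)"
    using assms by (elim landau_o.bigE)
  moreover have "((\<lambda>\<rho>. B * norm \<rho>) \<longlongrightarrow> 0) (at_right (0::real))"
    by (intro tendsto_mult_right_zero tendsto_norm_zero tendsto_ident_at)
  ultimately have "norm x \<le> 0"
    by (intro tendsto_lowerbound) auto
  then show ?thesis by simp
qed

lemma power_series_bigo_iff:
  fixes c :: "('n::finite \<Rightarrow> nat) \<Rightarrow> complex"
  assumes "\<forall>z. norm z < r \<longrightarrow> ((\<lambda>\<alpha>. c \<alpha> * monomial z \<alpha>) has_sum f z) UNIV" and "r > 0"
  shows "(\<lambda>z. norm (f z)) \<in> O[nhds 0](\<lambda>z. norm z ^ k) \<longleftrightarrow> (\<forall>\<alpha>. mdeg \<alpha> < k \<longrightarrow> c \<alpha> = 0)"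
  using eq_0_if_const_bigo_at_right_0[OF power_series_coeff_bigo_at_right_0[OF assms]]
    power_series_bigo_if_low_coeffs_vanish[OF assms]
  by (metis norm_eq_zero)

lemma enat_le_ord0_iff: "enat k \<le> ord0 f \<longleftrightarrow> (\<forall>\<alpha>. mdeg \<alpha> < k \<longrightarrow> taylor_coeffs0 f \<alpha> = 0)"
proof (cases "\<exists>\<alpha>. taylor_coeffs0 f \<alpha> \<noteq> 0")
  case True
  define L where "L = (LEAST d. \<exists>\<alpha>. mdeg \<alpha> = d \<and> taylor_coeffs0 f \<alpha> \<noteq> 0)"
  have "ord0 f = enat L"
    using True by (simp add: ord0_def L_def)
  moreover have "\<exists>\<alpha>. mdeg \<alpha> = L \<and> taylor_coeffs0 f \<alpha> \<noteq> 0"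
    unfolding L_def by (rule LeastI_ex) (use True in blast)
  moreover have "L \<le> mdeg \<alpha>" if "taylor_coeffs0 f \<alpha> \<noteq> 0" for \<alpha>
    unfolding L_def using that by (blast intro: Least_le)
  ultimately show ?thesis
    by (auto simp: not_less) (meson leD le_trans)
qed (simp add: ord0_def)

lemma analytic_germ0_taylor_series:
  assumes "analytic_germ0 f"
  obtains r where "r > 0"
    and "\<forall>z. norm z < r \<longrightarrow> ((\<lambda>\<alpha>. taylor_coeffs0 f \<alpha> * monomial z \<alpha>) has_sum f z) UNIV"
proof -
  have "power_series_at0 (taylor_coeffs0 f) f"
    using assms unfolding analytic_germ0_def taylor_coeffs0_def by (rule someI_ex)
  then show ?thesis
    using that unfolding power_series_at0_def by blast
qed

lemma enat_le_ord0_iff_bigo: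
  assumes "analytic_germ0 f"
  shows "enat k \<le> ord0 f \<longleftrightarrow> (\<lambda>z. norm (f z)) \<in> O[nhds 0](\<lambda>z. norm z ^ k)"
proof -
  obtain r where "r > 0"
    and "\<forall>z. norm z < r \<longrightarrow> ((\<lambda>\<alpha>. taylor_coeffs0 f \<alpha> * monomial z \<alpha>) has_sum f z) UNIV"
    using analytic_germ0_taylor_series[OF assms] by blast
  then show ?thesis
    unfolding enat_le_ord0_iff by (simp add: power_series_bigo_iff)
qed

lemma analytic_germ0_tendsto:
  assumes "analytic_germ0 f" and "f 0 = 0"
  shows "(f \<longlongrightarrow> 0) (nhds 0)"
proof -
  obtain r where "r > 0"
    and series: "\<forall>z. norm z < r \<longrightarrow> ((\<lambda>\<alpha>. taylor_coeffs0 f \<alpha> * monomial z \<alpha>) has_sum f z) UNIV"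
    using analytic_germ0_taylor_series[OF assms(1)] by blast
  have "((\<lambda>\<alpha>. taylor_coeffs0 f \<alpha> * monomial 0 \<alpha>) has_sum taylor_coeffs0 f (\<lambda>_. 0)) UNIV"
    by (rule has_sum_finite_neutralI[of "{\<lambda>_. 0}"]) (auto simp: monomial_0)
  moreover have "((\<lambda>\<alpha>. taylor_coeffs0 f \<alpha> * monomial 0 \<alpha>) has_sum f 0) UNIV"
    using series \<open>r > 0\<close> by simp
  ultimately have "taylor_coeffs0 f (\<lambda>_. 0) = f 0"
    by (rule has_sum_unique)
  then have "enat 1 \<le> ord0 f"
    using assms(2) by (simp add: enat_le_ord0_iff mdeg_eq_0_iff)
  then have "(\<lambda>z. norm (f z)) \<in> O[nhds 0](\<lambda>z. norm z ^ 1)"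
    by (simp add: enat_le_ord0_iff_bigo[OF assms(1)])
  then show ?thesis
    by (rule tendsto_0_if_norm_bigo) (simp add: tendsto_norm_zero[OF filterlim_ident])
qed

lemma bilip_homeo_germ0_bigo:
  assumes "bilip_homeo_germ0 h"
  shows "(\<lambda>x. norm (h x)) \<in> O[nhds 0](\<lambda>x. norm x)"
proof -
  obtain U K where "open U" "0 \<in> U" "h 0 = 0"
    and lip: "\<forall>x\<in>U. \<forall>y\<in>U. dist (h x) (h y) \<le> K * dist x y"
    using assms unfolding bilip_homeo_germ0_def by blast
  have "\<forall>\<^sub>F x in nhds 0. norm (norm (h x)) \<le> K * norm (norm x)"
    using eventually_nhds_in_open[OF \<open>open U\<close> \<open>0 \<in> U\<close>]
    by (rule eventually_mono) (use lip \<open>0 \<in> U\<close> \<open>h 0 = 0\<close> in \<open>force simp: dist_norm\<close>)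
  then show ?thesis
    by (rule bigoI)
qed

lemma bilip_homeo_germ0_tendsto:
  assumes "bilip_homeo_germ0 h"
  shows "(h \<longlongrightarrow> 0) (nhds 0)"
  using bilip_homeo_germ0_bigo[OF assms]
  by (rule tendsto_0_if_norm_bigo) (rule tendsto_norm_zero[OF filterlim_ident])

lemma bilip_homeo_germ0_inverse:
  assumes "bilip_homeo_germ0 h"
  obtains h' where "bilip_homeo_germ0 h'"
    and "\<forall>\<^sub>F y in nhds 0. h (h' y) = y" and "\<forall>\<^sub>F x in nhds 0. h' (h x) = x"
proof -
  obtain U K where "h 0 = 0" "open U" "0 \<in> U" "inj_on h U" "open (h ` U)" "K > 0"
    and bilip: "\<forall>x\<in>U. \<forall>y\<in>U. dist x y \<le> K * dist (h x) (h y) \<and> dist (h x) (h y) \<le> K * dist x y"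
    using assms unfolding bilip_homeo_germ0_def by blast
  define h' where "h' = inv_into U h"
  have h'_h: "h' (h x) = x" if "x \<in> U" for x
    using that \<open>inj_on h U\<close> by (simp add: h'_def)
  have "bilip_homeo_germ0 h'"
    unfolding bilip_homeo_germ0_def
  proof (intro conjI exI[of _ "h ` U"] exI[of _ K])
    show "h' 0 = 0"
      using h'_h \<open>0 \<in> U\<close> \<open>h 0 = 0\<close> by metis
    show "inj_on h' (h ` U)"
      by (simp add: h'_def inj_on_inv_into)
    show "open (h' ` h ` U)"
      using \<open>inj_on h U\<close> \<open>open U\<close> by (simp add: h'_def)
    show "\<forall>x\<in>h ` U. \<forall>y\<in>h ` U. dist x y \<le> K * dist (h' x) (h' y) \<and> dist (h' x) (h' y) \<le> K * dist x y"
      using bilip by (auto simp: h'_h)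
  qed (use \<open>open (h ` U)\<close> \<open>0 \<in> U\<close> \<open>h 0 = 0\<close> \<open>K > 0\<close> in force)+
  moreover have "\<forall>\<^sub>F y in nhds 0. h (h' y) = y"
    using eventually_nhds_in_open[OF \<open>open (h ` U)\<close>] \<open>0 \<in> U\<close> \<open>h 0 = 0\<close>
    by (force elim: eventually_mono simp: h'_h)
  moreover have "\<forall>\<^sub>F x in nhds 0. h' (h x) = x"
    using eventually_nhds_in_open[OF \<open>open U\<close> \<open>0 \<in> U\<close>] by (rule eventually_mono) (rule h'_h)
  ultimately show ?thesis
    using that by blast
qed

lemma bigo_norm_power_compose:
  assumes \<phi>\<^sub>1: "(\<lambda>x. norm (\<phi>\<^sub>1 x)) \<in> O[nhds 0](\<lambda>x. norm x)"
    and \<phi>\<^sub>2: "(\<lambda>y. norm (\<phi>\<^sub>2 y)) \<in> O[nhds 0](\<lambda>y. norm y)"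
    and eq: "\<forall>\<^sub>F x in nhds 0. f x = \<phi>\<^sub>2 (g (\<phi>\<^sub>1 x))"
    and "(g \<longlongrightarrow> 0) (nhds 0)"
    and g: "(\<lambda>w. norm (g w)) \<in> O[nhds 0](\<lambda>w. norm w ^ k)"
  shows "(\<lambda>x. norm (f x)) \<in> O[nhds 0](\<lambda>x. norm x ^ k)"
proof -
  have "(\<phi>\<^sub>1 \<longlongrightarrow> 0) (nhds 0)"
    using \<phi>\<^sub>1 by (rule tendsto_0_if_norm_bigo) (rule tendsto_norm_zero[OF filterlim_ident])
  then have "((\<lambda>x. g (\<phi>\<^sub>1 x)) \<longlongrightarrow> 0) (nhds 0)"
    using \<open>(g \<longlongrightarrow> 0) (nhds 0)\<close> by (rule filterlim_compose[rotated])
  have "(\<lambda>x. norm (f x)) \<in> O[nhds 0](\<lambda>x. norm (\<phi>\<^sub>2 (g (\<phi>\<^sub>1 x))))"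
    using eq by (intro bigoI[where c = 1]) (auto elim: eventually_mono)
  also have "(\<lambda>x. norm (\<phi>\<^sub>2 (g (\<phi>\<^sub>1 x)))) \<in> O[nhds 0](\<lambda>x. norm (g (\<phi>\<^sub>1 x)))"
    using \<phi>\<^sub>2 \<open>((\<lambda>x. g (\<phi>\<^sub>1 x)) \<longlongrightarrow> 0) (nhds 0)\<close> by (rule landau_o.big.compose)
  also have "(\<lambda>x. norm (g (\<phi>\<^sub>1 x))) \<in> O[nhds 0](\<lambda>x. norm (\<phi>\<^sub>1 x) ^ k)"
    using g \<open>(\<phi>\<^sub>1 \<longlongrightarrow> 0) (nhds 0)\<close> by (rule landau_o.big.compose)
  also have "(\<lambda>x. norm (\<phi>\<^sub>1 x) ^ k) \<in> O[nhds 0](\<lambda>x. norm x ^ k)"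
    using \<phi>\<^sub>1 by (rule landau_o.big_power)
  finally show ?thesis .
qed

lemma bilip_compose_swap:
  assumes "bilip_homeo_germ0 \<phi>\<^sub>1" and "bilip_homeo_germ0 \<phi>\<^sub>2"
    and eq: "\<forall>\<^sub>F x in nhds 0. f x = \<phi>\<^sub>2 (g (\<phi>\<^sub>1 x))"
    and "(g \<longlongrightarrow> 0) (nhds 0)"
  obtains \<psi>\<^sub>1 \<psi>\<^sub>2 where "bilip_homeo_germ0 \<psi>\<^sub>1" and "bilip_homeo_germ0 \<psi>\<^sub>2"
    and "\<forall>\<^sub>F y in nhds 0. g y = \<psi>\<^sub>2 (f (\<psi>\<^sub>1 y))"
proof -
  obtain \<psi>\<^sub>1 where \<psi>\<^sub>1: "bilip_homeo_germ0 \<psi>\<^sub>1" and "\<forall>\<^sub>F y in nhds 0. \<phi>\<^sub>1 (\<psi>\<^sub>1 y) = y"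
    using bilip_homeo_germ0_inverse[OF assms(1)] by blast
  obtain \<psi>\<^sub>2 where \<psi>\<^sub>2: "bilip_homeo_germ0 \<psi>\<^sub>2" and "\<forall>\<^sub>F v in nhds 0. \<psi>\<^sub>2 (\<phi>\<^sub>2 v) = v"
    using bilip_homeo_germ0_inverse[OF assms(2)] by blast
  have "\<forall>\<^sub>F y in nhds 0. f (\<psi>\<^sub>1 y) = \<phi>\<^sub>2 (g (\<phi>\<^sub>1 (\<psi>\<^sub>1 y)))"
    using eq bilip_homeo_germ0_tendsto[OF \<psi>\<^sub>1] by (rule eventually_compose_filterlim)
  moreover have "\<forall>\<^sub>F y in nhds 0. \<psi>\<^sub>2 (\<phi>\<^sub>2 (g y)) = g y"
    using \<open>\<forall>\<^sub>F v in nhds 0. \<psi>\<^sub>2 (\<phi>\<^sub>2 v) = v\<close> \<open>(g \<longlongrightarrow> 0) (nhds 0)\<close>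
    by (rule eventually_compose_filterlim)
  ultimately have "\<forall>\<^sub>F y in nhds 0. g y = \<psi>\<^sub>2 (f (\<psi>\<^sub>1 y))"
    using \<open>\<forall>\<^sub>F y in nhds 0. \<phi>\<^sub>1 (\<psi>\<^sub>1 y) = y\<close> by eventually_elim simp
  then show ?thesis
    using that \<psi>\<^sub>1 \<psi>\<^sub>2 by blast
qed

theorem corollary6p14:
  fixes f g :: "complex ^ 'n::finite \<Rightarrow> complex"
  assumes "analytic_germ0 f" and "analytic_germ0 g"
    and "bilip_RL_equiv f g"
  shows "ord0 f = ord0 g"
proof -
  obtain \<phi>\<^sub>1 \<phi>\<^sub>2 where \<phi>: "bilip_homeo_germ0 \<phi>\<^sub>1" "bilip_homeo_germ0 (\<phi>\<^sub>2 :: complex \<Rightarrow> complex)"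
    and f_eq: "\<forall>\<^sub>F z in nhds 0. f z = \<phi>\<^sub>2 (g (\<phi>\<^sub>1 z))" and "f 0 = 0" "g 0 = 0"
    using assms(3) unfolding bilip_RL_equiv_def by blast
  have f_lim: "(f \<longlongrightarrow> 0) (nhds 0)" and g_lim: "(g \<longlongrightarrow> 0) (nhds 0)"
    using analytic_germ0_tendsto assms(1,2) \<open>f 0 = 0\<close> \<open>g 0 = 0\<close> by blast+
  obtain \<psi>\<^sub>1 \<psi>\<^sub>2 where \<psi>: "bilip_homeo_germ0 \<psi>\<^sub>1" "bilip_homeo_germ0 (\<psi>\<^sub>2 :: complex \<Rightarrow> complex)"
    and g_eq: "\<forall>\<^sub>F z in nhds 0. g z = \<psi>\<^sub>2 (f (\<psi>\<^sub>1 z))"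
    using bilip_compose_swap[OF \<phi> f_eq g_lim] by blast
  show ?thesis
  proof (rule enat_eqI_enat_le)
    fix k
    show "enat k \<le> ord0 f \<longleftrightarrow> enat k \<le> ord0 g"
      unfolding enat_le_ord0_iff_bigo[OF assms(1)] enat_le_ord0_iff_bigo[OF assms(2)]
      using bigo_norm_power_compose[OF \<phi>[THEN bilip_homeo_germ0_bigo] f_eq g_lim]
        bigo_norm_power_compose[OF \<psi>[THEN bilip_homeo_germ0_bigo] g_eq f_lim]
      by blast
  qed
qed

end
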